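(* Let $\mathcal{C}=(\mathbf{C},\otimes,a,\mathcal{T})$ be a braided semigroupal category in which $\mathbf{C}$ is an additive category with pullbacks. Then the category $\mathbf{Lie}(\mathcal{C})$ of Lie objects has pullbacks. Specifically, given Lie morphisms $f\colon(A,\mu_A)\to(C,\mu_C)$ and $g\colon(B,\mu_B)\to(C,\mu_C)$, let $(A\times_CB,\pi_A,\pi_B)$ be their pullback in $\mathbf{C}$ and let $\mu_{A\times_CB}\colon(A\times_CB)\otimes(A\times_CB)\to A\times_CB$ be the unique morphism with $\pi_X\circ\mu_{A\times_CB}=\mu_X\circ(\pi_X\otimes\pi_X)$ for $X\in\{A,B\}$ (which exists). Then $((A\times_CB,\mu_{A\times_CB}),\pi_A,\pi_B)$ is a pullback of $f$ and $g$ in $\mathbf{Lie}(\mathcal{C})$.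
   Context: $a$ denotes the associativity natural isomorphism $a_{X,Y,Z}\colon(X\otimes Y)\otimes Z\to X\otimes(Y\otimes Z)$ and $\mathcal{T}_{X,Y}\colon X\otimes Y\to Y\otimes X$ the braiding natural isomorphism. A Lie object in $\mathcal{C}$ is a pair $(A,\mu)$ with $\mu\colon A\otimes A\to A$ such that $0=\mu\circ\mathcal{T}_{A,A}+\mu$ and $0=\mu\circ(\mathrm{Id}_A\otimes\mu)\circ a_{A,A,A}+\mu\circ(\mu\otimes\mathrm{Id}_A)\circ a^{-1}_{A,A,A}\circ(\mathrm{Id}_A\otimes\mathcal{T}_{A,A})\circ a_{A,A,A}-\mu\circ(\mu\otimes\mathrm{Id}_A)$. A Lie morphism $f\colon(A,\mu)\to(B,\eta)$ is a morphism $f\colon A\to B$ with $f\circ\mu=\eta\circ(f\otimes f)$. $\mathbf{Lie}(\mathcal{C})$ is the category of Lie objects and Lie morphisms. *)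

theory Defs
  imports Main
begin

record ('o,'m) cat =
  cObj  :: "'o set"
  cArr  :: "'m set"
  cDom  :: "'m \<Rightarrow> 'o"
  cCod  :: "'m \<Rightarrow> 'o"
  cId   :: "'o \<Rightarrow> 'm"
  cComp :: "'m \<Rightarrow> 'm \<Rightarrow> 'm"   \<comment> \<open>cComp C g f = g \<circ> f\<close>

definition hom :: "('o,'m,'x) cat_scheme \<Rightarrow> 'o \<Rightarrow> 'o \<Rightarrow> 'm set" where
  "hom C X Y = {f \<in> cArr C. cDom C f = X \<and> cCod C f = Y}"

definition category :: "('o,'m,'x) cat_scheme \<Rightarrow> bool" where
  "category C \<longleftrightarrow>
     (\<forall>f \<in> cArr C. cDom C f \<in> cObj C \<and> cCod C f \<in> cObj C) \<and>
     (\<forall>X \<in> cObj C. cId C X \<in> hom C X X) \<and>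
     (\<forall>f \<in> cArr C. \<forall>g \<in> cArr C. cCod C f = cDom C g \<longrightarrow>
         cComp C g f \<in> hom C (cDom C f) (cCod C g)) \<and>
     (\<forall>f \<in> cArr C. cComp C (cId C (cCod C f)) f = f \<and> cComp C f (cId C (cDom C f)) = f) \<and>
     (\<forall>f \<in> cArr C. \<forall>g \<in> cArr C. \<forall>h \<in> cArr C. cCod C f = cDom C g \<longrightarrow> cCod C g = cDom C h \<longrightarrow>
         cComp C h (cComp C g f) = cComp C (cComp C h g) f)"

definition is_iso :: "('o,'m,'x) cat_scheme \<Rightarrow> 'm \<Rightarrow> bool" where
  "is_iso C f \<longleftrightarrow> f \<in> cArr C \<and>
     (\<exists>g \<in> hom C (cCod C f) (cDom C f).
        cComp C g f = cId C (cDom C f) \<and> cComp C f g = cId C (cCod C f))"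

definition inv_arr :: "('o,'m,'x) cat_scheme \<Rightarrow> 'm \<Rightarrow> 'm" where
  "inv_arr C f = (SOME g. g \<in> hom C (cCod C f) (cDom C f) \<and>
        cComp C g f = cId C (cDom C f) \<and> cComp C f g = cId C (cCod C f))"

definition is_pullback ::
  "('o,'m,'x) cat_scheme \<Rightarrow> 'm \<Rightarrow> 'm \<Rightarrow> 'o \<Rightarrow> 'm \<Rightarrow> 'm \<Rightarrow> bool" where
  "is_pullback C f g P p q \<longleftrightarrow>
     f \<in> cArr C \<and> g \<in> cArr C \<and> cCod C f = cCod C g \<and> P \<in> cObj C \<and>
     p \<in> hom C P (cDom C f) \<and> q \<in> hom C P (cDom C g) \<and>
     cComp C f p = cComp C g q \<and>
     (\<forall>Q \<in> cObj C. \<forall>h k. h \<in> hom C Q (cDom C f) \<longrightarrow> k \<in> hom C Q (cDom C g) \<longrightarrow>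
          cComp C f h = cComp C g k \<longrightarrow>
          (\<exists>!u. u \<in> hom C Q P \<and> cComp C p u = h \<and> cComp C q u = k))"

definition has_pullbacks :: "('o,'m,'x) cat_scheme \<Rightarrow> bool" where
  "has_pullbacks C \<longleftrightarrow>
     (\<forall>f \<in> cArr C. \<forall>g \<in> cArr C. cCod C f = cCod C g \<longrightarrow> (\<exists>P p q. is_pullback C f g P p q))"

record ('o,'m) addcat = "('o,'m) cat" +
  cPlus :: "'m \<Rightarrow> 'm \<Rightarrow> 'm"
  cZero :: "'o \<Rightarrow> 'o \<Rightarrow> 'm"
  cNeg  :: "'m \<Rightarrow> 'm"

definition preadditive :: "('o,'m,'x) addcat_scheme \<Rightarrow> bool" where
  "preadditive C \<longleftrightarrow> category C \<and>
     (\<forall>X \<in> cObj C. \<forall>Y \<in> cObj C.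
        cZero C X Y \<in> hom C X Y \<and>
        (\<forall>f \<in> hom C X Y. \<forall>g \<in> hom C X Y. cPlus C f g \<in> hom C X Y) \<and>
        (\<forall>f \<in> hom C X Y. cNeg C f \<in> hom C X Y) \<and>
        (\<forall>f \<in> hom C X Y. \<forall>g \<in> hom C X Y. \<forall>h \<in> hom C X Y.
            cPlus C (cPlus C f g) h = cPlus C f (cPlus C g h)) \<and>
        (\<forall>f \<in> hom C X Y. \<forall>g \<in> hom C X Y. cPlus C f g = cPlus C g f) \<and>
        (\<forall>f \<in> hom C X Y. cPlus C f (cZero C X Y) = f) \<and>
        (\<forall>f \<in> hom C X Y. cPlus C f (cNeg C f) = cZero C X Y)) \<and>
     (\<forall>X \<in> cObj C. \<forall>Y \<in> cObj C. \<forall>Z \<in> cObj C.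
        (\<forall>f \<in> hom C X Y. \<forall>f' \<in> hom C X Y. \<forall>g \<in> hom C Y Z.
            cComp C g (cPlus C f f') = cPlus C (cComp C g f) (cComp C g f')) \<and>
        (\<forall>f \<in> hom C X Y. \<forall>g \<in> hom C Y Z. \<forall>g' \<in> hom C Y Z.
            cComp C (cPlus C g g') f = cPlus C (cComp C g f) (cComp C g' f)))"

definition additive :: "('o,'m,'x) addcat_scheme \<Rightarrow> bool" where
  "additive C \<longleftrightarrow> preadditive C \<and>
     (\<exists>Z \<in> cObj C. \<forall>X \<in> cObj C. (\<exists>!f. f \<in> hom C Z X) \<and> (\<exists>!f. f \<in> hom C X Z)) \<and>
     (\<forall>X \<in> cObj C. \<forall>Y \<in> cObj C. \<exists>P \<in> cObj C. \<exists>i1 i2 p1 p2.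
        i1 \<in> hom C X P \<and> i2 \<in> hom C Y P \<and> p1 \<in> hom C P X \<and> p2 \<in> hom C P Y \<and>
        cComp C p1 i1 = cId C X \<and> cComp C p2 i2 = cId C Y \<and>
        cComp C p1 i2 = cZero C Y X \<and> cComp C p2 i1 = cZero C X Y \<and>
        cPlus C (cComp C i1 p1) (cComp C i2 p2) = cId C P)"

record ('o,'m) bscat = "('o,'m) addcat" +
  cTens  :: "'o \<Rightarrow> 'o \<Rightarrow> 'o"
  cTensM :: "'m \<Rightarrow> 'm \<Rightarrow> 'm"
  cAssoc :: "'o \<Rightarrow> 'o \<Rightarrow> 'o \<Rightarrow> 'm"
  cBraid :: "'o \<Rightarrow> 'o \<Rightarrow> 'm"

definition braided_semigroupal :: "('o,'m,'x) bscat_scheme \<Rightarrow> bool" where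
  "braided_semigroupal C \<longleftrightarrow> category C \<and>
     \<comment> \<open>tensor product is a bifunctor\<close>
     (\<forall>X \<in> cObj C. \<forall>Y \<in> cObj C. cTens C X Y \<in> cObj C) \<and>
     (\<forall>f \<in> cArr C. \<forall>g \<in> cArr C. cTensM C f g \<in>
         hom C (cTens C (cDom C f) (cDom C g)) (cTens C (cCod C f) (cCod C g))) \<and>
     (\<forall>X \<in> cObj C. \<forall>Y \<in> cObj C. cTensM C (cId C X) (cId C Y) = cId C (cTens C X Y)) \<and>
     (\<forall>f \<in> cArr C. \<forall>f' \<in> cArr C. \<forall>g \<in> cArr C. \<forall>g' \<in> cArr C.
        cCod C f = cDom C f' \<longrightarrow> cCod C g = cDom C g' \<longrightarrow>
        cTensM C (cComp C f' f) (cComp C g' g) = cComp C (cTensM C f' g') (cTensM C f g)) \<and>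
     \<comment> \<open>associator: natural isomorphism\<close>
     (\<forall>X \<in> cObj C. \<forall>Y \<in> cObj C. \<forall>Z \<in> cObj C.
        cAssoc C X Y Z \<in> hom C (cTens C (cTens C X Y) Z) (cTens C X (cTens C Y Z)) \<and>
        is_iso C (cAssoc C X Y Z)) \<and>
     (\<forall>f \<in> cArr C. \<forall>g \<in> cArr C. \<forall>h \<in> cArr C.
        cComp C (cAssoc C (cCod C f) (cCod C g) (cCod C h)) (cTensM C (cTensM C f g) h) =
        cComp C (cTensM C f (cTensM C g h)) (cAssoc C (cDom C f) (cDom C g) (cDom C h))) \<and>
     \<comment> \<open>pentagon\<close>
     (\<forall>W \<in> cObj C. \<forall>X \<in> cObj C. \<forall>Y \<in> cObj C. \<forall>Z \<in> cObj C.
        cComp C (cAssoc C W X (cTens C Y Z)) (cAssoc C (cTens C W X) Y Z) =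
        cComp C (cTensM C (cId C W) (cAssoc C X Y Z))
          (cComp C (cAssoc C W (cTens C X Y) Z) (cTensM C (cAssoc C W X Y) (cId C Z)))) \<and>
     \<comment> \<open>braiding: natural isomorphism\<close>
     (\<forall>X \<in> cObj C. \<forall>Y \<in> cObj C.
        cBraid C X Y \<in> hom C (cTens C X Y) (cTens C Y X) \<and> is_iso C (cBraid C X Y)) \<and>
     (\<forall>f \<in> cArr C. \<forall>g \<in> cArr C.
        cComp C (cBraid C (cCod C f) (cCod C g)) (cTensM C f g) =
        cComp C (cTensM C g f) (cBraid C (cDom C f) (cDom C g))) \<and>
     \<comment> \<open>hexagons\<close>
     (\<forall>X \<in> cObj C. \<forall>Y \<in> cObj C. \<forall>Z \<in> cObj C.
        cComp C (cAssoc C Y Z X) (cComp C (cBraid C X (cTens C Y Z)) (cAssoc C X Y Z)) =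
        cComp C (cTensM C (cId C Y) (cBraid C X Z))
          (cComp C (cAssoc C Y X Z) (cTensM C (cBraid C X Y) (cId C Z)))) \<and>
     (\<forall>X \<in> cObj C. \<forall>Y \<in> cObj C. \<forall>Z \<in> cObj C.
        cComp C (inv_arr C (cAssoc C Z X Y))
          (cComp C (cBraid C (cTens C X Y) Z) (inv_arr C (cAssoc C X Y Z))) =
        cComp C (cTensM C (cBraid C X Z) (cId C Y))
          (cComp C (inv_arr C (cAssoc C X Z Y)) (cTensM C (cId C X) (cBraid C Y Z))))"

definition additive_braided_semigroupal :: "('o,'m,'x) bscat_scheme \<Rightarrow> bool" where
  "additive_braided_semigroupal C \<longleftrightarrow> additive C \<and> braided_semigroupal C"

definition lie_obj :: "('o,'m,'x) bscat_scheme \<Rightarrow> 'o \<Rightarrow> 'm \<Rightarrow> bool" where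
  "lie_obj C A \<mu> \<longleftrightarrow> A \<in> cObj C \<and> \<mu> \<in> hom C (cTens C A A) A \<and>
     cZero C (cTens C A A) A = cPlus C (cComp C \<mu> (cBraid C A A)) \<mu> \<and>
     cZero C (cTens C (cTens C A A) A) A =
       cPlus C
         (cPlus C
           (cComp C \<mu> (cComp C (cTensM C (cId C A) \<mu>) (cAssoc C A A A)))
           (cComp C \<mu> (cComp C (cTensM C \<mu> (cId C A))
              (cComp C (inv_arr C (cAssoc C A A A))
                 (cComp C (cTensM C (cId C A) (cBraid C A A)) (cAssoc C A A A))))))
         (cNeg C (cComp C \<mu> (cTensM C \<mu> (cId C A))))"

definition lie_mor :: "('o,'m,'x) bscat_scheme \<Rightarrow> 'o \<times> 'm \<Rightarrow> 'o \<times> 'm \<Rightarrow> 'm \<Rightarrow> bool" where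
  "lie_mor C X Y f \<longleftrightarrow> f \<in> hom C (fst X) (fst Y) \<and>
     cComp C f (snd X) = cComp C (snd Y) (cTensM C f f)"

text \<open>The category Lie(C): objects are Lie objects (A, mu); a morphism is a triple
  (source, f, target) with f a Lie morphism.\<close>
definition Lie_cat :: "('o,'m,'x) bscat_scheme \<Rightarrow> ('o \<times> 'm, ('o \<times> 'm) \<times> 'm \<times> ('o \<times> 'm)) cat" where
  "Lie_cat C = \<lparr> cObj = {X. lie_obj C (fst X) (snd X)},
     cArr = {(X, f, Y). lie_obj C (fst X) (snd X) \<and> lie_obj C (fst Y) (snd Y) \<and> lie_mor C X Y f},
     cDom = (\<lambda>(X, f, Y). X),
     cCod = (\<lambda>(X, f, Y). Y),
     cId = (\<lambda>X. (X, cId C (fst X), X)),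
     cComp = (\<lambda>(Y, g, Z) (X, f, Y'). (X, cComp C g f, Z)) \<rparr>"

end

theory Submission
  imports Defs
begin

text \<open>
  Since \<open>f\<close> and \<open>g\<close> are Lie morphisms, \<open>\<mu>\<^sub>A \<circ> (\<pi>\<^sub>A \<otimes> \<pi>\<^sub>A)\<close> and \<open>\<mu>\<^sub>B \<circ> (\<pi>\<^sub>B \<otimes> \<pi>\<^sub>B)\<close>
  become equal after composing with \<open>f\<close> and \<open>g\<close>, so they factor uniquely through the
  pullback as some \<open>\<mu>\<close>. The Lie axioms say that two arrows built from the bracket, the
  antisymmetrizer and the jacobiator, vanish. Naturality of \<open>a\<close>, \<open>a\<^sup>-\<^sup>1\<close>, \<open>\<T>\<close> and
  functoriality of \<open>\<otimes>\<close> make every such arrow commute with a multiplicative arrow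
  \<open>p : (P, \<mu>) \<rightarrow> (A, \<mu>\<^sub>A)\<close>: \<open>p \<circ> t(\<mu>) = t(\<mu>\<^sub>A) \<circ> (p \<otimes> p \<otimes> p)\<close>. So \<open>\<pi>\<^sub>A \<circ> t(\<mu>)\<close> and
  \<open>\<pi>\<^sub>B \<circ> t(\<mu>)\<close> vanish, and \<open>t(\<mu>) = 0\<close> because pullback projections are jointly monic.
  The universal property in \<open>Lie(\<C>)\<close> is inherited from \<open>\<C>\<close>: the induced arrow is
  multiplicative, again by joint monicity.
\<close>

lemma is_iso_inv_arr:
  assumes "is_iso C f"
  shows "inv_arr C f \<in> hom C (cCod C f) (cDom C f)"
    and "cComp C (inv_arr C f) f = cId C (cDom C f)"
    and "cComp C f (inv_arr C f) = cId C (cCod C f)"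
proof -
  have "\<exists>g. g \<in> hom C (cCod C f) (cDom C f) \<and>
        cComp C g f = cId C (cDom C f) \<and> cComp C f g = cId C (cCod C f)"
    using assms unfolding is_iso_def by blast
  from someI_ex[OF this] show "inv_arr C f \<in> hom C (cCod C f) (cDom C f)"
    "cComp C (inv_arr C f) f = cId C (cDom C f)" "cComp C f (inv_arr C f) = cId C (cCod C f)"
    unfolding inv_arr_def by auto
qed

lemma Lie_cat_obj_iff: "X \<in> cObj (Lie_cat C) \<longleftrightarrow> lie_obj C (fst X) (snd X)"
  by (simp add: Lie_cat_def)

lemma Lie_cat_hom_iff:
  "u \<in> hom (Lie_cat C) X Y \<longleftrightarrow>
     (\<exists>f. u = (X, f, Y) \<and> lie_obj C (fst X) (snd X) \<and> lie_obj C (fst Y) (snd Y) \<and> lie_mor C X Y f)"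
  by (auto simp: hom_def Lie_cat_def)

lemma Lie_cat_arr_iff: "(X, f, Y) \<in> cArr (Lie_cat C) \<longleftrightarrow> (X, f, Y) \<in> hom (Lie_cat C) X Y"
  by (simp add: hom_def Lie_cat_def)

lemma Lie_cat_simps [simp]:
  "cDom (Lie_cat C) (X, f, Y) = X"
  "cCod (Lie_cat C) (X, f, Y) = Y"
  "cComp (Lie_cat C) (Y, g, Z) (X, f, Y') = (X, cComp C g f, Z)"
  by (simp_all add: Lie_cat_def)

locale additive_bsc =
  fixes C :: "('o,'m,'x) bscat_scheme"
  assumes additive_braided_semigroupal: "additive_braided_semigroupal C"
begin

abbreviation comp\<^sub>C (infixr "\<cdot>" 75) where "g \<cdot> f \<equiv> cComp C g f"
abbreviation tensor_arr (infixr "\<otimes>" 80) where "f \<otimes> g \<equiv> cTensM C f g"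
abbreviation tensor_obj (infixr "\<odot>" 70) where "X \<odot> Y \<equiv> cTens C X Y"
abbreviation plus\<^sub>C (infixl "\<oplus>" 65) where "f \<oplus> g \<equiv> cPlus C f g"
abbreviation "arr f \<equiv> f \<in> cArr C"
abbreviation "obj X \<equiv> X \<in> cObj C"
abbreviation "dom\<^sub>C \<equiv> cDom C"
abbreviation "cod\<^sub>C \<equiv> cCod C"
abbreviation "id\<^sub>C \<equiv> cId C"
abbreviation "zero\<^sub>C \<equiv> cZero C"
abbreviation "neg\<^sub>C \<equiv> cNeg C"
abbreviation "\<alpha> \<equiv> cAssoc C"
abbreviation "\<alpha>' X Y Z \<equiv> inv_arr C (cAssoc C X Y Z)"
abbreviation "\<beta> \<equiv> cBraid C"

lemma braided_semigroupal: "braided_semigroupal C"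
  and preadditive: "preadditive C"
  using additive_braided_semigroupal
  unfolding additive_braided_semigroupal_def additive_def by blast+

lemma category: "category C"
  using braided_semigroupal unfolding braided_semigroupal_def by blast

lemma hom_iff: "f \<in> hom C X Y \<longleftrightarrow> arr f \<and> dom\<^sub>C f = X \<and> cod\<^sub>C f = Y"
  by (simp add: hom_def)

lemma obj_dom [simp]: "arr f \<Longrightarrow> obj (dom\<^sub>C f)"
  and obj_cod [simp]: "arr f \<Longrightarrow> obj (cod\<^sub>C f)"
  using category unfolding category_def by auto

lemma hom_objs: "f \<in> hom C X Y \<Longrightarrow> obj X \<and> obj Y"
  by (auto simp: hom_iff)

lemma arr_id [simp]: "obj X \<Longrightarrow> arr (id\<^sub>C X)"
  and dom_id [simp]: "obj X \<Longrightarrow> dom\<^sub>C (id\<^sub>C X) = X"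
  and cod_id [simp]: "obj X \<Longrightarrow> cod\<^sub>C (id\<^sub>C X) = X"
  using category unfolding category_def hom_def by auto

lemma arr_comp [simp]: "arr f \<Longrightarrow> arr g \<Longrightarrow> cod\<^sub>C f = dom\<^sub>C g \<Longrightarrow> arr (g \<cdot> f)"
  and dom_comp [simp]: "arr f \<Longrightarrow> arr g \<Longrightarrow> cod\<^sub>C f = dom\<^sub>C g \<Longrightarrow> dom\<^sub>C (g \<cdot> f) = dom\<^sub>C f"
  and cod_comp [simp]: "arr f \<Longrightarrow> arr g \<Longrightarrow> cod\<^sub>C f = dom\<^sub>C g \<Longrightarrow> cod\<^sub>C (g \<cdot> f) = cod\<^sub>C g"
  using category unfolding category_def hom_def by auto

lemma comp_id_left [simp]: "arr f \<Longrightarrow> cod\<^sub>C f = X \<Longrightarrow> id\<^sub>C X \<cdot> f = f"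
  and comp_id_right [simp]: "arr f \<Longrightarrow> dom\<^sub>C f = X \<Longrightarrow> f \<cdot> id\<^sub>C X = f"
  using category unfolding category_def by auto

lemma comp_assoc\<^sub>C:
  "arr f \<Longrightarrow> arr g \<Longrightarrow> arr h \<Longrightarrow> cod\<^sub>C f = dom\<^sub>C g \<Longrightarrow> cod\<^sub>C g = dom\<^sub>C h \<Longrightarrow>
   h \<cdot> (g \<cdot> f) = (h \<cdot> g) \<cdot> f"
  using category unfolding category_def by auto

lemma obj_tensor [simp]: "obj X \<Longrightarrow> obj Y \<Longrightarrow> obj (X \<odot> Y)"
  using braided_semigroupal unfolding braided_semigroupal_def by auto

lemma arr_tensor [simp]: "arr f \<Longrightarrow> arr g \<Longrightarrow> arr (f \<otimes> g)"
  and dom_tensor [simp]: "arr f \<Longrightarrow> arr g \<Longrightarrow> dom\<^sub>C (f \<otimes> g) = dom\<^sub>C f \<odot> dom\<^sub>C g"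
  and cod_tensor [simp]: "arr f \<Longrightarrow> arr g \<Longrightarrow> cod\<^sub>C (f \<otimes> g) = cod\<^sub>C f \<odot> cod\<^sub>C g"
  using braided_semigroupal unfolding braided_semigroupal_def hom_def by auto

lemma interchange:
  "arr f \<Longrightarrow> arr f' \<Longrightarrow> arr g \<Longrightarrow> arr g' \<Longrightarrow> cod\<^sub>C f = dom\<^sub>C f' \<Longrightarrow> cod\<^sub>C g = dom\<^sub>C g' \<Longrightarrow>
   (f' \<cdot> f) \<otimes> (g' \<cdot> g) = (f' \<otimes> g') \<cdot> (f \<otimes> g)"
  using braided_semigroupal unfolding braided_semigroupal_def by auto

lemma arr_assoc [simp]: "obj X \<Longrightarrow> obj Y \<Longrightarrow> obj Z \<Longrightarrow> arr (\<alpha> X Y Z)"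
  and dom_assoc [simp]: "obj X \<Longrightarrow> obj Y \<Longrightarrow> obj Z \<Longrightarrow> dom\<^sub>C (\<alpha> X Y Z) = (X \<odot> Y) \<odot> Z"
  and cod_assoc [simp]: "obj X \<Longrightarrow> obj Y \<Longrightarrow> obj Z \<Longrightarrow> cod\<^sub>C (\<alpha> X Y Z) = X \<odot> (Y \<odot> Z)"
  and is_iso_assoc: "obj X \<Longrightarrow> obj Y \<Longrightarrow> obj Z \<Longrightarrow> is_iso C (\<alpha> X Y Z)"
  using braided_semigroupal unfolding braided_semigroupal_def hom_def by auto

lemma assoc_naturality:
  "arr f \<Longrightarrow> arr g \<Longrightarrow> arr h \<Longrightarrow>
   \<alpha> (cod\<^sub>C f) (cod\<^sub>C g) (cod\<^sub>C h) \<cdot> ((f \<otimes> g) \<otimes> h) = (f \<otimes> (g \<otimes> h)) \<cdot> \<alpha> (dom\<^sub>C f) (dom\<^sub>C g) (dom\<^sub>C h)"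
  using braided_semigroupal unfolding braided_semigroupal_def by auto

lemma arr_assoc_inv [simp]: "obj X \<Longrightarrow> obj Y \<Longrightarrow> obj Z \<Longrightarrow> arr (\<alpha>' X Y Z)"
  and dom_assoc_inv [simp]: "obj X \<Longrightarrow> obj Y \<Longrightarrow> obj Z \<Longrightarrow> dom\<^sub>C (\<alpha>' X Y Z) = X \<odot> (Y \<odot> Z)"
  and cod_assoc_inv [simp]: "obj X \<Longrightarrow> obj Y \<Longrightarrow> obj Z \<Longrightarrow> cod\<^sub>C (\<alpha>' X Y Z) = (X \<odot> Y) \<odot> Z"
  and assoc_inv_comp_assoc:
    "obj X \<Longrightarrow> obj Y \<Longrightarrow> obj Z \<Longrightarrow> \<alpha>' X Y Z \<cdot> \<alpha> X Y Z = id\<^sub>C ((X \<odot> Y) \<odot> Z)"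
  and assoc_comp_assoc_inv:
    "obj X \<Longrightarrow> obj Y \<Longrightarrow> obj Z \<Longrightarrow> \<alpha> X Y Z \<cdot> \<alpha>' X Y Z = id\<^sub>C (X \<odot> (Y \<odot> Z))"
  using is_iso_inv_arr[OF is_iso_assoc[of X Y Z]] by (auto simp: hom_def)

lemma assoc_inv_naturality:
  assumes "arr f" "arr g" "arr h"
  shows "((f \<otimes> g) \<otimes> h) \<cdot> \<alpha>' (dom\<^sub>C f) (dom\<^sub>C g) (dom\<^sub>C h) = \<alpha>' (cod\<^sub>C f) (cod\<^sub>C g) (cod\<^sub>C h) \<cdot> (f \<otimes> (g \<otimes> h))"
proof -
  let ?ac = "\<alpha> (cod\<^sub>C f) (cod\<^sub>C g) (cod\<^sub>C h)" and ?ad = "\<alpha> (dom\<^sub>C f) (dom\<^sub>C g) (dom\<^sub>C h)"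
  let ?ic = "\<alpha>' (cod\<^sub>C f) (cod\<^sub>C g) (cod\<^sub>C h)" and ?id = "\<alpha>' (dom\<^sub>C f) (dom\<^sub>C g) (dom\<^sub>C h)"
  let ?L = "(f \<otimes> g) \<otimes> h" and ?R = "f \<otimes> (g \<otimes> h)"
  have "?L \<cdot> ?id = (?ic \<cdot> ?ac) \<cdot> (?L \<cdot> ?id)"
    using assms by (simp add: assoc_inv_comp_assoc)
  also have "\<dots> = ?ic \<cdot> ((?ac \<cdot> ?L) \<cdot> ?id)" using assms by (simp add: comp_assoc\<^sub>C)
  also have "\<dots> = ?ic \<cdot> ((?R \<cdot> ?ad) \<cdot> ?id)" using assms by (simp add: assoc_naturality)
  also have "\<dots> = ?ic \<cdot> (?R \<cdot> (?ad \<cdot> ?id))" using assms by (simp add: comp_assoc\<^sub>C)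
  also have "\<dots> = ?ic \<cdot> ?R" using assms by (simp add: assoc_comp_assoc_inv)
  finally show ?thesis .
qed

lemma arr_braid [simp]: "obj X \<Longrightarrow> obj Y \<Longrightarrow> arr (\<beta> X Y)"
  and dom_braid [simp]: "obj X \<Longrightarrow> obj Y \<Longrightarrow> dom\<^sub>C (\<beta> X Y) = X \<odot> Y"
  and cod_braid [simp]: "obj X \<Longrightarrow> obj Y \<Longrightarrow> cod\<^sub>C (\<beta> X Y) = Y \<odot> X"
  using braided_semigroupal unfolding braided_semigroupal_def hom_def by auto

lemma braid_naturality:
  "arr f \<Longrightarrow> arr g \<Longrightarrow> \<beta> (cod\<^sub>C f) (cod\<^sub>C g) \<cdot> (f \<otimes> g) = (g \<otimes> f) \<cdot> \<beta> (dom\<^sub>C f) (dom\<^sub>C g)"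
  using braided_semigroupal unfolding braided_semigroupal_def by auto

lemma hom_abelian_group:
  assumes "obj X" "obj Y"
  shows "zero\<^sub>C X Y \<in> hom C X Y \<and>
    (\<forall>f \<in> hom C X Y. \<forall>g \<in> hom C X Y. f \<oplus> g \<in> hom C X Y) \<and>
    (\<forall>f \<in> hom C X Y. neg\<^sub>C f \<in> hom C X Y) \<and>
    (\<forall>f \<in> hom C X Y. \<forall>g \<in> hom C X Y. \<forall>h \<in> hom C X Y. (f \<oplus> g) \<oplus> h = f \<oplus> (g \<oplus> h)) \<and>
    (\<forall>f \<in> hom C X Y. \<forall>g \<in> hom C X Y. f \<oplus> g = g \<oplus> f) \<and>
    (\<forall>f \<in> hom C X Y. f \<oplus> zero\<^sub>C X Y = f) \<and>
    (\<forall>f \<in> hom C X Y. f \<oplus> neg\<^sub>C f = zero\<^sub>C X Y)"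
  using preadditive assms unfolding preadditive_def by (elim conjE) blast

lemma comp_bilinear:
  assumes "obj X" "obj Y" "obj W"
  shows "(\<forall>f \<in> hom C X Y. \<forall>f' \<in> hom C X Y. \<forall>g \<in> hom C Y W. g \<cdot> (f \<oplus> f') = g \<cdot> f \<oplus> g \<cdot> f') \<and>
    (\<forall>f \<in> hom C X Y. \<forall>g \<in> hom C Y W. \<forall>g' \<in> hom C Y W. (g \<oplus> g') \<cdot> f = g \<cdot> f \<oplus> g' \<cdot> f)"
proof -
  have "\<forall>X \<in> cObj C. \<forall>Y \<in> cObj C. \<forall>W \<in> cObj C.
    (\<forall>f \<in> hom C X Y. \<forall>f' \<in> hom C X Y. \<forall>g \<in> hom C Y W. g \<cdot> (f \<oplus> f') = g \<cdot> f \<oplus> g \<cdot> f') \<and>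
    (\<forall>f \<in> hom C X Y. \<forall>g \<in> hom C Y W. \<forall>g' \<in> hom C Y W. (g \<oplus> g') \<cdot> f = g \<cdot> f \<oplus> g' \<cdot> f)"
    using preadditive unfolding preadditive_def by (elim conjE)
  then show ?thesis using assms by blast
qed

lemma zero_hom: "obj X \<Longrightarrow> obj Y \<Longrightarrow> zero\<^sub>C X Y \<in> hom C X Y"
  using hom_abelian_group by blast

lemma plus_hom: "f \<in> hom C X Y \<Longrightarrow> g \<in> hom C X Y \<Longrightarrow> f \<oplus> g \<in> hom C X Y"
  and neg_hom: "f \<in> hom C X Y \<Longrightarrow> neg\<^sub>C f \<in> hom C X Y"
  and plus_assoc:
    "f \<in> hom C X Y \<Longrightarrow> g \<in> hom C X Y \<Longrightarrow> h \<in> hom C X Y \<Longrightarrow> (f \<oplus> g) \<oplus> h = f \<oplus> (g \<oplus> h)"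
  and plus_commute: "f \<in> hom C X Y \<Longrightarrow> g \<in> hom C X Y \<Longrightarrow> f \<oplus> g = g \<oplus> f"
  and plus_zero: "f \<in> hom C X Y \<Longrightarrow> f \<oplus> zero\<^sub>C X Y = f"
  and plus_neg: "f \<in> hom C X Y \<Longrightarrow> f \<oplus> neg\<^sub>C f = zero\<^sub>C X Y"
  using hom_abelian_group[of X Y] hom_objs[of f X Y] by blast+

lemma comp_plus: "p \<in> hom C Y W \<Longrightarrow> f \<in> hom C X Y \<Longrightarrow> g \<in> hom C X Y \<Longrightarrow> p \<cdot> (f \<oplus> g) = p \<cdot> f \<oplus> p \<cdot> g"
  and plus_comp: "q \<in> hom C X Y \<Longrightarrow> f \<in> hom C Y W \<Longrightarrow> g \<in> hom C Y W \<Longrightarrow> (f \<oplus> g) \<cdot> q = f \<cdot> q \<oplus> g \<cdot> q"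
  using comp_bilinear[of X Y W] hom_objs[of f X Y] hom_objs[of f Y W] hom_objs[of q X Y]
    hom_objs[of p Y W] by blast+

lemma plus_idem_eq_zero:
  assumes "f \<in> hom C X Y" "f \<oplus> f = f"
  shows "f = zero\<^sub>C X Y"
proof -
  have "f = f \<oplus> (f \<oplus> neg\<^sub>C f)" using assms(1) by (simp add: plus_neg plus_zero)
  also have "\<dots> = (f \<oplus> f) \<oplus> neg\<^sub>C f" using assms(1) by (simp add: plus_assoc neg_hom)
  finally show ?thesis using assms by (simp add: plus_neg)
qed

lemma neg_unique:
  assumes "f \<in> hom C X Y" "g \<in> hom C X Y" "f \<oplus> g = zero\<^sub>C X Y"
  shows "g = neg\<^sub>C f"
proof -
  have "g = g \<oplus> (f \<oplus> neg\<^sub>C f)" using assms by (simp add: plus_neg plus_zero)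
  also have "\<dots> = (f \<oplus> g) \<oplus> neg\<^sub>C f" using assms by (metis plus_assoc plus_commute neg_hom)
  also have "\<dots> = neg\<^sub>C f"
    using assms by (metis plus_commute plus_zero neg_hom zero_hom hom_objs)
  finally show ?thesis .
qed

lemma comp_zero:
  assumes "p \<in> hom C Y W" "obj X"
  shows "p \<cdot> zero\<^sub>C X Y = zero\<^sub>C X W"
proof (rule plus_idem_eq_zero)
  have z: "zero\<^sub>C X Y \<in> hom C X Y" using assms by (simp add: zero_hom hom_objs)
  then show "p \<cdot> zero\<^sub>C X Y \<in> hom C X W" using assms(1) by (auto simp: hom_iff)
  show "p \<cdot> zero\<^sub>C X Y \<oplus> p \<cdot> zero\<^sub>C X Y = p \<cdot> zero\<^sub>C X Y"
    using comp_plus[OF assms(1) z z] by (simp add: plus_zero z)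
qed

lemma zero_comp:
  assumes "q \<in> hom C X Y" "obj W"
  shows "zero\<^sub>C Y W \<cdot> q = zero\<^sub>C X W"
proof (rule plus_idem_eq_zero)
  have z: "zero\<^sub>C Y W \<in> hom C Y W" using assms by (simp add: zero_hom hom_objs)
  then show "zero\<^sub>C Y W \<cdot> q \<in> hom C X W" using assms(1) by (auto simp: hom_iff)
  show "zero\<^sub>C Y W \<cdot> q \<oplus> zero\<^sub>C Y W \<cdot> q = zero\<^sub>C Y W \<cdot> q"
    using plus_comp[OF assms(1) z z] by (simp add: plus_zero z)
qed

lemma comp_neg:
  assumes "p \<in> hom C Y W" "f \<in> hom C X Y"
  shows "p \<cdot> neg\<^sub>C f = neg\<^sub>C (p \<cdot> f)"
proof (rule neg_unique)
  show "p \<cdot> f \<in> hom C X W" "p \<cdot> neg\<^sub>C f \<in> hom C X W"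
    using assms neg_hom[OF assms(2)] by (auto simp: hom_iff)
  have "p \<cdot> f \<oplus> p \<cdot> neg\<^sub>C f = p \<cdot> (f \<oplus> neg\<^sub>C f)"
    using comp_plus[OF assms neg_hom[OF assms(2)]] by simp
  then show "p \<cdot> f \<oplus> p \<cdot> neg\<^sub>C f = zero\<^sub>C X W"
    using assms by (simp add: plus_neg comp_zero hom_objs)
qed

lemma neg_comp:
  assumes "q \<in> hom C X Y" "f \<in> hom C Y W"
  shows "neg\<^sub>C f \<cdot> q = neg\<^sub>C (f \<cdot> q)"
proof (rule neg_unique)
  show "f \<cdot> q \<in> hom C X W" "neg\<^sub>C f \<cdot> q \<in> hom C X W"
    using assms neg_hom[OF assms(2)] by (auto simp: hom_iff)
  have "f \<cdot> q \<oplus> neg\<^sub>C f \<cdot> q = (f \<oplus> neg\<^sub>C f) \<cdot> q"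
    using plus_comp[OF assms neg_hom[OF assms(2)]] by simp
  then show "f \<cdot> q \<oplus> neg\<^sub>C f \<cdot> q = zero\<^sub>C X W"
    using assms by (simp add: plus_neg zero_comp hom_objs)
qed

text \<open>Evaluated on \<open>(x \<otimes> y) \<otimes> z\<close>, the three terms of the Jacobi identity are
  \<open>[x,[y,z]]\<close>, \<open>[[x,z],y]\<close> and \<open>[[x,y],z]\<close>.\<close>

definition jac_right :: "'o \<Rightarrow> 'm \<Rightarrow> 'm" where
  "jac_right X m = m \<cdot> ((id\<^sub>C X \<otimes> m) \<cdot> \<alpha> X X X)"

definition jac_swap :: "'o \<Rightarrow> 'm \<Rightarrow> 'm" where
  "jac_swap X m = m \<cdot> ((m \<otimes> id\<^sub>C X) \<cdot> (\<alpha>' X X X \<cdot> ((id\<^sub>C X \<otimes> \<beta> X X) \<cdot> \<alpha> X X X)))"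

definition jac_left :: "'o \<Rightarrow> 'm \<Rightarrow> 'm" where
  "jac_left X m = m \<cdot> (m \<otimes> id\<^sub>C X)"

definition jacobiator :: "'o \<Rightarrow> 'm \<Rightarrow> 'm" where
  "jacobiator X m = (jac_right X m \<oplus> jac_swap X m) \<oplus> neg\<^sub>C (jac_left X m)"

definition antisymmetrizer :: "'o \<Rightarrow> 'm \<Rightarrow> 'm" where
  "antisymmetrizer X m = m \<cdot> \<beta> X X \<oplus> m"

lemma lie_obj_iff:
  "lie_obj C X m \<longleftrightarrow> obj X \<and> m \<in> hom C (X \<odot> X) X \<and>
     antisymmetrizer X m = zero\<^sub>C (X \<odot> X) X \<and> jacobiator X m = zero\<^sub>C ((X \<odot> X) \<odot> X) X"
  unfolding lie_obj_def antisymmetrizer_def jacobiator_def jac_right_def jac_swap_def jac_left_def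
  by auto

lemma jac_hom:
  assumes "m \<in> hom C (X \<odot> X) X" "obj X"
  shows "jac_right X m \<in> hom C ((X \<odot> X) \<odot> X) X"
    and "jac_swap X m \<in> hom C ((X \<odot> X) \<odot> X) X"
    and "jac_left X m \<in> hom C ((X \<odot> X) \<odot> X) X"
  using assms unfolding jac_right_def jac_swap_def jac_left_def by (auto simp: hom_iff)

end

locale multiplicative_arr = additive_bsc C for C :: "('o,'m,'x) bscat_scheme" +
  fixes P A :: 'o and p \<mu> m :: 'm
  assumes p_hom: "p \<in> hom C P A"
    and mu_hom: "\<mu> \<in> hom C (P \<odot> P) P"
    and m_hom: "m \<in> hom C (A \<odot> A) A"
    and multiplicative: "p \<cdot> \<mu> = m \<cdot> (p \<otimes> p)"
begin

lemma arr_facts [simp]: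
  "obj P" "obj A" "arr p" "dom\<^sub>C p = P" "cod\<^sub>C p = A"
  "arr \<mu>" "dom\<^sub>C \<mu> = P \<odot> P" "cod\<^sub>C \<mu> = P" "arr m" "dom\<^sub>C m = A \<odot> A" "cod\<^sub>C m = A"
  using p_hom mu_hom m_hom by (auto simp: hom_iff)

abbreviation "p3 \<equiv> (p \<otimes> p) \<otimes> p"
abbreviation "p3' \<equiv> p \<otimes> (p \<otimes> p)"

lemma tensor_comp_id_mult: "(p \<otimes> p) \<cdot> (id\<^sub>C P \<otimes> \<mu>) = (id\<^sub>C A \<otimes> m) \<cdot> p3'"
proof -
  have "(p \<otimes> p) \<cdot> (id\<^sub>C P \<otimes> \<mu>) = (p \<cdot> id\<^sub>C P) \<otimes> (p \<cdot> \<mu>)"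
    using interchange[of "id\<^sub>C P" p \<mu> p] by simp
  also have "\<dots> = (id\<^sub>C A \<cdot> p) \<otimes> (m \<cdot> (p \<otimes> p))" by (simp add: multiplicative)
  also have "\<dots> = (id\<^sub>C A \<otimes> m) \<cdot> p3'" using interchange[of p "id\<^sub>C A" "p \<otimes> p" m] by simp
  finally show ?thesis .
qed

lemma tensor_comp_mult_id: "(p \<otimes> p) \<cdot> (\<mu> \<otimes> id\<^sub>C P) = (m \<otimes> id\<^sub>C A) \<cdot> p3"
proof -
  have "(p \<otimes> p) \<cdot> (\<mu> \<otimes> id\<^sub>C P) = (p \<cdot> \<mu>) \<otimes> (p \<cdot> id\<^sub>C P)"
    using interchange[of \<mu> p "id\<^sub>C P" p] by simp
  also have "\<dots> = (m \<cdot> (p \<otimes> p)) \<otimes> (id\<^sub>C A \<cdot> p)" by (simp add: multiplicative)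
  also have "\<dots> = (m \<otimes> id\<^sub>C A) \<cdot> p3" using interchange[of "p \<otimes> p" m p "id\<^sub>C A"] by simp
  finally show ?thesis .
qed

lemma tensor_comp_braid: "\<beta> A A \<cdot> (p \<otimes> p) = (p \<otimes> p) \<cdot> \<beta> P P"
  using braid_naturality[of p p] by simp

lemma tensor3_comp_id_braid: "p3' \<cdot> (id\<^sub>C P \<otimes> \<beta> P P) = (id\<^sub>C A \<otimes> \<beta> A A) \<cdot> p3'"
proof -
  have "p3' \<cdot> (id\<^sub>C P \<otimes> \<beta> P P) = (p \<cdot> id\<^sub>C P) \<otimes> ((p \<otimes> p) \<cdot> \<beta> P P)"
    using interchange[of "id\<^sub>C P" p "\<beta> P P" "p \<otimes> p"] by simp
  also have "\<dots> = (id\<^sub>C A \<cdot> p) \<otimes> (\<beta> A A \<cdot> (p \<otimes> p))" by (simp add: tensor_comp_braid)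
  also have "\<dots> = (id\<^sub>C A \<otimes> \<beta> A A) \<cdot> p3'"
    using interchange[of p "id\<^sub>C A" "p \<otimes> p" "\<beta> A A"] by simp
  finally show ?thesis .
qed

lemma tensor3_comp_assoc: "p3' \<cdot> \<alpha> P P P = \<alpha> A A A \<cdot> p3"
  using assoc_naturality[of p p p] by simp

lemma tensor3_comp_assoc_inv: "p3 \<cdot> \<alpha>' P P P = \<alpha>' A A A \<cdot> p3'"
  using assoc_inv_naturality[of p p p] by simp

lemma comp_jac_right: "p \<cdot> jac_right P \<mu> = jac_right A m \<cdot> p3"
proof -
  have "p \<cdot> jac_right P \<mu> = m \<cdot> (((p \<otimes> p) \<cdot> (id\<^sub>C P \<otimes> \<mu>)) \<cdot> \<alpha> P P P)"
    unfolding jac_right_def by (simp add: comp_assoc\<^sub>C multiplicative)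
  also have "\<dots> = m \<cdot> ((id\<^sub>C A \<otimes> m) \<cdot> (p3' \<cdot> \<alpha> P P P))"
    unfolding tensor_comp_id_mult by (simp add: comp_assoc\<^sub>C)
  also have "\<dots> = jac_right A m \<cdot> p3"
    unfolding tensor3_comp_assoc jac_right_def by (simp add: comp_assoc\<^sub>C)
  finally show ?thesis .
qed

lemma comp_jac_swap: "p \<cdot> jac_swap P \<mu> = jac_swap A m \<cdot> p3"
proof -
  have "p \<cdot> jac_swap P \<mu> =
      m \<cdot> (((p \<otimes> p) \<cdot> (\<mu> \<otimes> id\<^sub>C P)) \<cdot> (\<alpha>' P P P \<cdot> ((id\<^sub>C P \<otimes> \<beta> P P) \<cdot> \<alpha> P P P)))"
    unfolding jac_swap_def by (simp add: comp_assoc\<^sub>C multiplicative)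
  also have "\<dots> = m \<cdot> ((m \<otimes> id\<^sub>C A) \<cdot> ((p3 \<cdot> \<alpha>' P P P) \<cdot> ((id\<^sub>C P \<otimes> \<beta> P P) \<cdot> \<alpha> P P P)))"
    unfolding tensor_comp_mult_id by (simp add: comp_assoc\<^sub>C)
  also have "\<dots> = m \<cdot> ((m \<otimes> id\<^sub>C A) \<cdot> (\<alpha>' A A A \<cdot> ((p3' \<cdot> (id\<^sub>C P \<otimes> \<beta> P P)) \<cdot> \<alpha> P P P)))"
    unfolding tensor3_comp_assoc_inv by (simp add: comp_assoc\<^sub>C)
  also have "\<dots> = m \<cdot> ((m \<otimes> id\<^sub>C A) \<cdot> (\<alpha>' A A A \<cdot> ((id\<^sub>C A \<otimes> \<beta> A A) \<cdot> (p3' \<cdot> \<alpha> P P P))))"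
    unfolding tensor3_comp_id_braid by (simp add: comp_assoc\<^sub>C)
  also have "\<dots> = jac_swap A m \<cdot> p3"
    unfolding tensor3_comp_assoc jac_swap_def by (simp add: comp_assoc\<^sub>C)
  finally show ?thesis .
qed

lemma comp_jac_left: "p \<cdot> jac_left P \<mu> = jac_left A m \<cdot> p3"
proof -
  have "p \<cdot> jac_left P \<mu> = m \<cdot> ((p \<otimes> p) \<cdot> (\<mu> \<otimes> id\<^sub>C P))"
    unfolding jac_left_def by (simp add: comp_assoc\<^sub>C multiplicative)
  also have "\<dots> = jac_left A m \<cdot> p3"
    unfolding tensor_comp_mult_id jac_left_def by (simp add: comp_assoc\<^sub>C)
  finally show ?thesis .
qed

lemma comp_antisymmetrizer: "p \<cdot> antisymmetrizer P \<mu> = antisymmetrizer A m \<cdot> (p \<otimes> p)"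
proof -
  have homs: "\<mu> \<cdot> \<beta> P P \<in> hom C (P \<odot> P) P" "m \<cdot> \<beta> A A \<in> hom C (A \<odot> A) A"
    "p \<otimes> p \<in> hom C (P \<odot> P) (A \<odot> A)"
    by (simp_all add: hom_iff)
  have "p \<cdot> (\<mu> \<cdot> \<beta> P P) = m \<cdot> ((p \<otimes> p) \<cdot> \<beta> P P)"
    by (simp add: comp_assoc\<^sub>C multiplicative)
  also have "\<dots> = (m \<cdot> \<beta> A A) \<cdot> (p \<otimes> p)"
    by (simp add: comp_assoc\<^sub>C flip: tensor_comp_braid)
  finally have "p \<cdot> (\<mu> \<cdot> \<beta> P P) = (m \<cdot> \<beta> A A) \<cdot> (p \<otimes> p)" .
  then show ?thesis
    unfolding antisymmetrizer_def
    using comp_plus[OF p_hom homs(1) mu_hom] plus_comp[OF homs(3,2) m_hom]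
    by (simp add: multiplicative)
qed

lemma comp_jacobiator: "p \<cdot> jacobiator P \<mu> = jacobiator A m \<cdot> p3"
proof -
  have p3_hom: "p3 \<in> hom C ((P \<odot> P) \<odot> P) ((A \<odot> A) \<odot> A)" by (simp add: hom_iff)
  note JP = jac_hom[OF mu_hom arr_facts(1)] and JA = jac_hom[OF m_hom arr_facts(2)]
  have "p \<cdot> jacobiator P \<mu> = (p \<cdot> jac_right P \<mu> \<oplus> p \<cdot> jac_swap P \<mu>) \<oplus> neg\<^sub>C (p \<cdot> jac_left P \<mu>)"
    unfolding jacobiator_def
    using comp_plus[OF p_hom plus_hom[OF JP(1,2)] neg_hom[OF JP(3)]] comp_plus[OF p_hom JP(1,2)]
      comp_neg[OF p_hom JP(3)]
    by simp
  also have "\<dots> = (jac_right A m \<cdot> p3 \<oplus> jac_swap A m \<cdot> p3) \<oplus> neg\<^sub>C (jac_left A m \<cdot> p3)"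
    by (simp add: comp_jac_right comp_jac_swap comp_jac_left)
  also have "\<dots> = jacobiator A m \<cdot> p3"
    unfolding jacobiator_def
    using plus_comp[OF p3_hom plus_hom[OF JA(1,2)] neg_hom[OF JA(3)]] plus_comp[OF p3_hom JA(1,2)]
      neg_comp[OF p3_hom JA(3)]
    by simp
  finally show ?thesis .
qed

lemma comp_lie_axioms:
  assumes "lie_obj C A m"
  shows "p \<cdot> antisymmetrizer P \<mu> = p \<cdot> zero\<^sub>C (P \<odot> P) P"
    and "p \<cdot> jacobiator P \<mu> = p \<cdot> zero\<^sub>C ((P \<odot> P) \<odot> P) P"
  using assms p_hom
  by (simp_all add: lie_obj_iff comp_antisymmetrizer comp_jacobiator zero_comp comp_zero hom_iff)

lemma comp_mult_tensor:
  assumes "q \<in> hom C X P"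
  shows "p \<cdot> (\<mu> \<cdot> (q \<otimes> q)) = m \<cdot> ((p \<cdot> q) \<otimes> (p \<cdot> q))"
  using assms by (auto simp: hom_iff comp_assoc\<^sub>C multiplicative interchange)

end

context additive_bsc
begin

lemma multiplicative_arrI:
  assumes "p \<in> hom C P A" "\<mu> \<in> hom C (P \<odot> P) P" "m \<in> hom C (A \<odot> A) A" "p \<cdot> \<mu> = m \<cdot> (p \<otimes> p)"
  shows "multiplicative_arr C P A p \<mu> m"
  using assms additive_bsc_axioms by (simp add: multiplicative_arr_def multiplicative_arr_axioms_def)

lemma lie_mor_multiplicative_arr:
  assumes "lie_obj C X mX" "lie_obj C Y mY" "lie_mor C (X, mX) (Y, mY) f"
  shows "multiplicative_arr C X Y f mX mY"
  using assms by (intro multiplicative_arrI) (simp_all add: lie_obj_def lie_mor_def)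

lemma lie_obj_if_jointly_monic:
  assumes "multiplicative_arr C P A p \<mu> mA" "multiplicative_arr C P B q \<mu> mB"
    and "lie_obj C A mA" "lie_obj C B mB"
    and monic: "\<And>Q x y. x \<in> hom C Q P \<Longrightarrow> y \<in> hom C Q P \<Longrightarrow> p \<cdot> x = p \<cdot> y \<Longrightarrow> q \<cdot> x = q \<cdot> y \<Longrightarrow> x = y"
  shows "lie_obj C P \<mu>"
proof -
  interpret p: multiplicative_arr C P A p \<mu> mA by fact
  interpret q: multiplicative_arr C P B q \<mu> mB by fact
  have mu: "\<mu> \<in> hom C (P \<odot> P) P" and P: "obj P" by (simp_all add: p.mu_hom)
  have "antisymmetrizer P \<mu> = zero\<^sub>C (P \<odot> P) P"
  proof (rule monic)
    show "antisymmetrizer P \<mu> \<in> hom C (P \<odot> P) P"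
      unfolding antisymmetrizer_def using mu by (intro plus_hom) (auto simp: hom_iff)
    show "zero\<^sub>C (P \<odot> P) P \<in> hom C (P \<odot> P) P" using P by (simp add: zero_hom)
  qed (use p.comp_lie_axioms(1) q.comp_lie_axioms(1) assms(3,4) in blast)+
  moreover have "jacobiator P \<mu> = zero\<^sub>C ((P \<odot> P) \<odot> P) P"
  proof (rule monic)
    show "jacobiator P \<mu> \<in> hom C ((P \<odot> P) \<odot> P) P"
      unfolding jacobiator_def using jac_hom[OF mu P] by (intro plus_hom neg_hom)
    show "zero\<^sub>C ((P \<odot> P) \<odot> P) P \<in> hom C ((P \<odot> P) \<odot> P) P" using P by (simp add: zero_hom)
  qed (use p.comp_lie_axioms(2) q.comp_lie_axioms(2) assms(3,4) in blast)+
  ultimately show ?thesis using p.mu_hom by (simp add: lie_obj_iff)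
qed

lemma pullback_square:
  assumes "is_pullback C f g P p q"
  shows "p \<in> hom C P (dom\<^sub>C f)" "q \<in> hom C P (dom\<^sub>C g)" "f \<cdot> p = g \<cdot> q" "arr f" "arr g"
  using assms unfolding is_pullback_def by simp_all

lemma pullback_lift:
  assumes "is_pullback C f g P p q"
    and "h \<in> hom C Q (dom\<^sub>C f)" "k \<in> hom C Q (dom\<^sub>C g)" "f \<cdot> h = g \<cdot> k"
  shows "\<exists>!u. u \<in> hom C Q P \<and> p \<cdot> u = h \<and> q \<cdot> u = k"
proof -
  have "\<forall>Q \<in> cObj C. \<forall>h k. h \<in> hom C Q (dom\<^sub>C f) \<longrightarrow> k \<in> hom C Q (dom\<^sub>C g) \<longrightarrow>
      f \<cdot> h = g \<cdot> k \<longrightarrow> (\<exists>!u. u \<in> hom C Q P \<and> p \<cdot> u = h \<and> q \<cdot> u = k)"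
    using assms(1) unfolding is_pullback_def by (elim conjE)
  moreover have "obj Q" using hom_objs[OF assms(2)] ..
  ultimately show ?thesis using assms(2-4) by blast
qed

lemma pullback_jointly_monic:
  assumes pb: "is_pullback C f g P p q"
    and "x \<in> hom C Q P" "y \<in> hom C Q P" "p \<cdot> x = p \<cdot> y" "q \<cdot> x = q \<cdot> y"
  shows "x = y"
proof -
  note p = pullback_square(1)[OF pb] and q = pullback_square(2)[OF pb]
    and pullback_square(3-5)[OF pb]
  have "p \<cdot> x \<in> hom C Q (dom\<^sub>C f)" "q \<cdot> x \<in> hom C Q (dom\<^sub>C g)"
    using assms(2) p q by (auto simp: hom_iff)
  moreover have "f \<cdot> (p \<cdot> x) = (f \<cdot> p) \<cdot> x" "(g \<cdot> q) \<cdot> x = g \<cdot> (q \<cdot> x)"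
    using assms(2) p q \<open>arr f\<close> \<open>arr g\<close> by (auto simp: hom_iff comp_assoc\<^sub>C)
  then have "f \<cdot> (p \<cdot> x) = g \<cdot> (q \<cdot> x)" using \<open>f \<cdot> p = g \<cdot> q\<close> by simp
  ultimately have "\<exists>!u. u \<in> hom C Q P \<and> p \<cdot> u = p \<cdot> x \<and> q \<cdot> u = q \<cdot> x"
    by (rule pullback_lift[OF pb])
  then show ?thesis
    using assms(2-5) by (elim ex1E) (metis (no_types))
qed

lemma pullback_bracket_ex1:
  assumes "lie_obj C A mA" "lie_obj C B mB" "lie_obj C Z mZ"
    and "lie_mor C (A, mA) (Z, mZ) f" "lie_mor C (B, mB) (Z, mZ) g"
    and pb: "is_pullback C f g P p q"
  shows "\<exists>!\<mu>. \<mu> \<in> hom C (P \<odot> P) P \<and> p \<cdot> \<mu> = mA \<cdot> (p \<otimes> p) \<and> q \<cdot> \<mu> = mB \<cdot> (q \<otimes> q)"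
proof -
  interpret f: multiplicative_arr C A Z f mA mZ
    using assms(1,3,4) by (rule lie_mor_multiplicative_arr)
  interpret g: multiplicative_arr C B Z g mB mZ
    using assms(2,3,5) by (rule lie_mor_multiplicative_arr)
  have p: "p \<in> hom C P A" and q: "q \<in> hom C P B" and "f \<cdot> p = g \<cdot> q"
    using pullback_square[OF pb] by simp_all
  then have "f \<cdot> (mA \<cdot> (p \<otimes> p)) = g \<cdot> (mB \<cdot> (q \<otimes> q))"
    by (simp add: f.comp_mult_tensor g.comp_mult_tensor)
  moreover have "mA \<cdot> (p \<otimes> p) \<in> hom C (P \<odot> P) A" "mB \<cdot> (q \<otimes> q) \<in> hom C (P \<odot> P) B"
    using p q by (auto simp: hom_iff)
  ultimately show ?thesis
    using pullback_lift[OF pb] by simp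
qed

lemma pullback_lift_lie_mor:
  assumes pb: "is_pullback C f g P p q"
    and "multiplicative_arr C P A p \<mu> mA" "multiplicative_arr C P B q \<mu> mB"
    and h: "lie_mor C (Q, mQ) (A, mA) h" and k: "lie_mor C (Q, mQ) (B, mB) k"
    and mQ: "mQ \<in> hom C (Q \<odot> Q) Q" and "f \<cdot> h = g \<cdot> k"
  shows "\<exists>!u. lie_mor C (Q, mQ) (P, \<mu>) u \<and> p \<cdot> u = h \<and> q \<cdot> u = k"
proof -
  interpret p: multiplicative_arr C P A p \<mu> mA by fact
  interpret q: multiplicative_arr C P B q \<mu> mB by fact
  note monic = pullback_jointly_monic[OF pb]
  have "h \<in> hom C Q (dom\<^sub>C f)" "k \<in> hom C Q (dom\<^sub>C g)"
    using pullback_square(1,2)[OF pb] h k unfolding lie_mor_def by (simp_all add: hom_iff)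
  then obtain u where u: "u \<in> hom C Q P" "p \<cdot> u = h" "q \<cdot> u = k"
    using pullback_lift[OF pb] \<open>f \<cdot> h = g \<cdot> k\<close> by blast
  have "u \<cdot> mQ = \<mu> \<cdot> (u \<otimes> u)"
  proof (rule monic)
    show "u \<cdot> mQ \<in> hom C (Q \<odot> Q) P" "\<mu> \<cdot> (u \<otimes> u) \<in> hom C (Q \<odot> Q) P"
      using u(1) mQ by (auto simp: hom_iff)
    have "p \<cdot> (u \<cdot> mQ) = h \<cdot> mQ" "q \<cdot> (u \<cdot> mQ) = k \<cdot> mQ"
      using u mQ by (auto simp: hom_iff comp_assoc\<^sub>C)
    then show "p \<cdot> (u \<cdot> mQ) = p \<cdot> (\<mu> \<cdot> (u \<otimes> u))" "q \<cdot> (u \<cdot> mQ) = q \<cdot> (\<mu> \<cdot> (u \<otimes> u))"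
      using h k u by (simp_all add: lie_mor_def p.comp_mult_tensor q.comp_mult_tensor)
  qed
  then have "lie_mor C (Q, mQ) (P, \<mu>) u" using u(1) by (simp add: lie_mor_def)
  moreover have "v = u" if "lie_mor C (Q, mQ) (P, \<mu>) v" "p \<cdot> v = h" "q \<cdot> v = k" for v
  proof (rule monic)
    show "v \<in> hom C Q P" using that(1) by (simp add: lie_mor_def)
  qed (use u that in simp_all)
  ultimately show ?thesis
    using u(2,3) by (intro ex1I[of _ u]) blast+
qed

lemma Lie_cat_pullback_lift:
  assumes pb: "is_pullback C f g P p q"
    and mp: "multiplicative_arr C P A p \<mu> mA" and mq: "multiplicative_arr C P B q \<mu> mB"
    and lP: "lie_obj C P \<mu>"
    and hk: "h \<in> hom (Lie_cat C) Q (A, mA)" "k \<in> hom (Lie_cat C) Q (B, mB)"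
    and square: "cComp (Lie_cat C) ((A, mA), f, (Z, mZ)) h = cComp (Lie_cat C) ((B, mB), g, (Z, mZ)) k"
  shows "\<exists>!u. u \<in> hom (Lie_cat C) Q (P, \<mu>) \<and>
    cComp (Lie_cat C) ((P, \<mu>), p, (A, mA)) u = h \<and> cComp (Lie_cat C) ((P, \<mu>), q, (B, mB)) u = k"
proof -
  obtain Q0 mQ h0 k0 where Q: "Q = (Q0, mQ)" and h: "h = (Q, h0, (A, mA))"
    and k: "k = (Q, k0, (B, mB))" and lQ: "lie_obj C Q0 mQ"
    and "lie_mor C (Q0, mQ) (A, mA) h0" "lie_mor C (Q0, mQ) (B, mB) k0"
    using hk by (cases Q) (auto simp: Lie_cat_hom_iff)
  moreover have "f \<cdot> h0 = g \<cdot> k0" using square h k by simp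
  ultimately obtain u0 where u0: "lie_mor C (Q0, mQ) (P, \<mu>) u0" "p \<cdot> u0 = h0" "q \<cdot> u0 = k0"
    and unique: "\<And>v. lie_mor C (Q0, mQ) (P, \<mu>) v \<Longrightarrow> p \<cdot> v = h0 \<Longrightarrow> q \<cdot> v = k0 \<Longrightarrow> v = u0"
    using pullback_lift_lie_mor[OF pb mp mq] by (metis lie_obj_def)
  show ?thesis
  proof (rule ex1I[of _ "(Q, u0, (P, \<mu>))"])
    show "(Q, u0, (P, \<mu>)) \<in> hom (Lie_cat C) Q (P, \<mu>) \<and>
        cComp (Lie_cat C) ((P, \<mu>), p, (A, mA)) (Q, u0, (P, \<mu>)) = h \<and>
        cComp (Lie_cat C) ((P, \<mu>), q, (B, mB)) (Q, u0, (P, \<mu>)) = k"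
      using Q h k lQ lP u0 by (simp add: Lie_cat_hom_iff)
    fix v assume "v \<in> hom (Lie_cat C) Q (P, \<mu>) \<and>
        cComp (Lie_cat C) ((P, \<mu>), p, (A, mA)) v = h \<and> cComp (Lie_cat C) ((P, \<mu>), q, (B, mB)) v = k"
    then obtain v0 where "v = (Q, v0, (P, \<mu>))" "lie_mor C (Q0, mQ) (P, \<mu>) v0"
        "p \<cdot> v0 = h0" "q \<cdot> v0 = k0"
      using Q h k by (auto simp: Lie_cat_hom_iff)
    then show "v = (Q, u0, (P, \<mu>))" using unique by simp
  qed
qed

lemma Lie_cat_is_pullback:
  assumes lA: "lie_obj C A mA" and lB: "lie_obj C B mB" and lZ: "lie_obj C Z mZ"
    and f: "lie_mor C (A, mA) (Z, mZ) f" and g: "lie_mor C (B, mB) (Z, mZ) g"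
    and pb: "is_pullback C f g P p q"
    and mu: "\<mu> \<in> hom C (P \<odot> P) P" "p \<cdot> \<mu> = mA \<cdot> (p \<otimes> p)" "q \<cdot> \<mu> = mB \<cdot> (q \<otimes> q)"
  shows "is_pullback (Lie_cat C) ((A, mA), f, (Z, mZ)) ((B, mB), g, (Z, mZ))
           (P, \<mu>) ((P, \<mu>), p, (A, mA)) ((P, \<mu>), q, (B, mB))"
proof -
  have p: "p \<in> hom C P A" and q: "q \<in> hom C P B"
    using pullback_square(1,2)[OF pb] f g by (simp_all add: lie_mor_def hom_iff)
  have mp: "multiplicative_arr C P A p \<mu> mA" and mq: "multiplicative_arr C P B q \<mu> mB"
    using p q mu lA lB by (simp_all add: multiplicative_arrI lie_obj_def)
  have lP: "lie_obj C P \<mu>"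
    using mp mq lA lB pullback_jointly_monic[OF pb] by (rule lie_obj_if_jointly_monic)
  show ?thesis
    unfolding is_pullback_def
  proof (intro conjI)
    show "((A, mA), f, (Z, mZ)) \<in> cArr (Lie_cat C)" "((B, mB), g, (Z, mZ)) \<in> cArr (Lie_cat C)"
      using lA lB lZ f g by (simp_all add: Lie_cat_arr_iff Lie_cat_hom_iff)
    show "(P, \<mu>) \<in> cObj (Lie_cat C)" using lP by (simp add: Lie_cat_obj_iff)
    show "((P, \<mu>), p, (A, mA)) \<in> hom (Lie_cat C) (P, \<mu>) (cDom (Lie_cat C) ((A, mA), f, (Z, mZ)))"
      "((P, \<mu>), q, (B, mB)) \<in> hom (Lie_cat C) (P, \<mu>) (cDom (Lie_cat C) ((B, mB), g, (Z, mZ)))"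
      using lP lA lB p q mu by (simp_all add: Lie_cat_hom_iff lie_mor_def)
    show "cComp (Lie_cat C) ((A, mA), f, (Z, mZ)) ((P, \<mu>), p, (A, mA)) =
        cComp (Lie_cat C) ((B, mB), g, (Z, mZ)) ((P, \<mu>), q, (B, mB))"
      using pullback_square(3)[OF pb] by simp
  qed (use Lie_cat_pullback_lift[OF pb mp mq lP] in auto)
qed

lemma Lie_cat_has_pullbacks:
  assumes "has_pullbacks C"
  shows "has_pullbacks (Lie_cat C)"
  unfolding has_pullbacks_def
proof (intro ballI impI)
  fix F G assume F: "F \<in> cArr (Lie_cat C)" and G: "G \<in> cArr (Lie_cat C)"
    and cod: "cCod (Lie_cat C) F = cCod (Lie_cat C) G"
  obtain A mA f Z mZ B mB g where F_def: "F = ((A, mA), f, (Z, mZ))" and G_def: "G = ((B, mB), g, (Z, mZ))"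
    using cod by (cases F, cases G) auto
  have lie: "lie_obj C A mA" "lie_obj C B mB" "lie_obj C Z mZ"
    "lie_mor C (A, mA) (Z, mZ) f" "lie_mor C (B, mB) (Z, mZ) g"
    using F G unfolding F_def G_def by (simp_all add: Lie_cat_arr_iff Lie_cat_hom_iff)
  then have "arr f" "arr g" "cod\<^sub>C f = cod\<^sub>C g" by (simp_all add: lie_mor_def hom_iff)
  then obtain P p q where pb: "is_pullback C f g P p q"
    using assms unfolding has_pullbacks_def by blast
  obtain \<mu> where "\<mu> \<in> hom C (P \<odot> P) P" "p \<cdot> \<mu> = mA \<cdot> (p \<otimes> p)" "q \<cdot> \<mu> = mB \<cdot> (q \<otimes> q)"
    using pullback_bracket_ex1[OF lie pb] by blast
  then show "\<exists>P p q. is_pullback (Lie_cat C) F G P p q"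
    unfolding F_def G_def using Lie_cat_is_pullback[OF lie pb] by blast
qed

end

theorem mainTheorem7:
  fixes \<C> :: "('o,'m,'x) bscat_scheme"
    and A B C :: 'o and \<mu>A \<mu>B \<mu>C f g :: 'm
    and P :: 'o and \<pi>A \<pi>B :: 'm
  assumes "additive_braided_semigroupal \<C>"
    and "has_pullbacks \<C>"
    and "lie_obj \<C> A \<mu>A" and "lie_obj \<C> B \<mu>B" and "lie_obj \<C> C \<mu>C"
    and "lie_mor \<C> (A, \<mu>A) (C, \<mu>C) f" and "lie_mor \<C> (B, \<mu>B) (C, \<mu>C) g"
    and "is_pullback \<C> f g P \<pi>A \<pi>B"
  shows "(\<exists>!\<mu>. \<mu> \<in> hom \<C> (cTens \<C> P P) P \<and>
            cComp \<C> \<pi>A \<mu> = cComp \<C> \<mu>A (cTensM \<C> \<pi>A \<pi>A) \<and>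
            cComp \<C> \<pi>B \<mu> = cComp \<C> \<mu>B (cTensM \<C> \<pi>B \<pi>B))
       \<and> (\<forall>\<mu>. \<mu> \<in> hom \<C> (cTens \<C> P P) P \<and>
            cComp \<C> \<pi>A \<mu> = cComp \<C> \<mu>A (cTensM \<C> \<pi>A \<pi>A) \<and>
            cComp \<C> \<pi>B \<mu> = cComp \<C> \<mu>B (cTensM \<C> \<pi>B \<pi>B) \<longrightarrow>
            is_pullback (Lie_cat \<C>) ((A, \<mu>A), f, (C, \<mu>C)) ((B, \<mu>B), g, (C, \<mu>C))
              (P, \<mu>) ((P, \<mu>), \<pi>A, (A, \<mu>A)) ((P, \<mu>), \<pi>B, (B, \<mu>B)))
       \<and> has_pullbacks (Lie_cat \<C>)"
proof -
  interpret additive_bsc \<C> by (rule additive_bsc.intro) fact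
  show ?thesis
    using pullback_bracket_ex1[OF assms(3-8)] Lie_cat_is_pullback[OF assms(3-8)]
      Lie_cat_has_pullbacks[OF assms(2)]
    by blast
qed

end
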